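(* Let $a_1,\dots,a_5,b,\beta_{vh},m,\tau_h,\tau_v,\mu_v,z_0>0$, $y_0=z_0a_1/a_2$, let $g\ge0$ be a probability density on $[0,y_0]$ with mean $y^\star=\int_0^{y_0}yg(y)\,dy\in(0,y_0)$, and let $\beta_{hv}(z)$ be a given function. Suppose $S(t),E(t),E_v(t),I_v(t)$, $I(t,z,y)$ ($z\ge z_0$, $y\ge0$) and $R(t,y)$ ($y\ge y_0$) are classical solutions of $$\partial_tI+\partial_z\big((a_1z-a_2y)I\big)+\partial_y\big((-a_3y+a_4z)I\big)=0,$$ $$\partial_tR-\partial_y(a_5yR)=-I(t,z_0,y)(a_1z_0-a_2y),\quad y\ge y_0,$$ $$\dot S=-b\beta_{vh}mI_vS+a_5y_0R(t,y_0),\qquad \dot E=b\beta_{vh}mI_vS-\tfrac1{\tau_h}E,$$ $$\dot E_v=b\int_0^\infty\!\!\int_{z_0}^\infty I(t,z,y)\beta_{hv}(z)\,dz\,dy\,(1-E_v-I_v)-\Big(\tfrac1{\tau_v}+\mu_v\Big)E_v,\qquad \dot I_v=\tfrac1{\tau_v}E_v-\mu_vI_v,$$ with boundary conditions $I(t,z_0,y)=\dfrac{E(t)g(y)}{(a_1z_0-a_2y^\star)\tau_h}$ for $y\in[0,y_0]$ and $I(t,z,0)=0$ for $z>z_0$, and with $R(t,y)\to0$ as $y\to\infty$ and $I(t,z,y)\to0$ as $z^2+y^2\to\infty$ (sufficiently fast for the integrals below to be computed by integrating the equations). Then $$\frac{d}{dt}\Big(S(t)+E(t)+\int_0^\infty\!\!\int_{z_0}^\infty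 I(t,z,y)\,dz\,dy+\int_{y_0}^\infty R(t,y)\,dy\Big)=0.$$
   Context: This is a host–vector epidemic model: $S,E$ are the susceptible and exposed host proportions, $I(t,z,y)$ the density of infected hosts with respect to viral load $z$ and antibody level $y$, $R(t,y)$ the density of recovered hosts with respect to antibody level, and $E_v,I_v$ the exposed and infected vector proportions; $m=N_v/N_h$ is the vector-to-host ratio. *)

theory Defs
  imports "HOL-Analysis.Analysis"
begin

end

(*
  Every transfer term cancels in the total host mass. Integrating the transport equation for I
  over the quadrant z > z0, y > 0, the y-flux integrates to zero (I vanishes on y = 0 and decays
  at infinity), so the I-mass changes only by the flux through the edge z = z0, the integral of
  (a1 z0 - a2 y) I(t, z0, y) over y > 0. On (0, y0] the boundary condition and the mean y* of g
  turn this into E / tau_h, the outflow of E; on (y0, oo) it is exactly the source removed from R,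
  whose drift term integrates to - a5 y0 R(t, y0), the inflow of S. Differentiation under the
  integral signs is justified by dominated convergence, using the decay bounds that hold
  uniformly on compact time intervals.
*)
theory Submission
  imports Defs "HOL-Probability.Sinc_Integral" "HOL-Real_Asymp.Real_Asymp"
begin

lemma integral_dominated_convergence_at_within:
  fixes f :: "real \<Rightarrow> 'a \<Rightarrow> 'b::{banach, second_countable_topology}"
  assumes meas: "\<forall>\<^sub>F s in at t within T. f s \<in> borel_measurable M"
    and "g \<in> borel_measurable M" and "integrable M w"
    and lim: "AE x in M. ((\<lambda>s. f s x) \<longlongrightarrow> g x) (at t within T)"
    and bound: "\<forall>\<^sub>F s in at t within T. AE x in M. norm (f s x) \<le> w x"
  shows "((\<lambda>s. integral\<^sup>L M (f s)) \<longlongrightarrow> integral\<^sup>L M g) (at t within T)"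
proof (subst tendsto_at_iff_sequentially, intro allI impI)
  fix X :: "nat \<Rightarrow> real"
  assume "\<forall>i. X i \<in> T - {t}" and "X \<longlonglongrightarrow> t"
  then have X: "filterlim X (at t within T) sequentially"
    by (auto simp: filterlim_at)
  obtain N where N: "\<And>n. N \<le> n \<Longrightarrow> f (X n) \<in> borel_measurable M \<and> (AE x in M. norm (f (X n) x) \<le> w x)"
    using filterlim_iff[THEN iffD1, OF X, rule_format, OF eventually_conj[OF meas bound]]
    by (auto simp: eventually_sequentially)
  show "((\<lambda>s. integral\<^sup>L M (f s)) \<circ> X) \<longlonglongrightarrow> integral\<^sup>L M g"
    unfolding comp_def
  proof (rule LIMSEQ_offset[where k = N], rule integral_dominated_convergence[where w = w])
    show "AE x in M. (\<lambda>n. f (X (n + N)) x) \<longlonglongrightarrow> g x"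
      using lim by eventually_elim (rule LIMSEQ_ignore_initial_segment, rule filterlim_compose[OF _ X])
  qed (use N assms(2,3) in auto)
qed

lemma has_real_derivative_integral:
  fixes f f' :: "real \<Rightarrow> 'a \<Rightarrow> real"
  assumes "d > 0"
    and meas: "\<And>s. s \<in> ball t d \<Longrightarrow> f s \<in> borel_measurable M"
    and "f' t \<in> borel_measurable M" and int: "integrable M (f t)" and "integrable M w"
    and deriv: "AE x in M. \<forall>s\<in>ball t d.
                  ((\<lambda>s. f s x) has_real_derivative f' s x) (at s) \<and> \<bar>f' s x\<bar> \<le> w x"
  shows "((\<lambda>s. integral\<^sup>L M (f s)) has_real_derivative integral\<^sup>L M (f' t)) (at t)"
proof -
  have lipschitz: "AE x in M. \<forall>s\<in>ball t d. \<bar>f s x - f t x\<bar> \<le> w x * \<bar>s - t\<bar>"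
    using deriv
  proof eventually_elim
    case (elim x)
    have "((\<lambda>s. f s x) has_field_derivative f' s x) (at s within ball t d)"
      and "norm (f' s x) \<le> w x" if "s \<in> ball t d" for s
      using elim that by (auto intro: has_field_derivative_at_within)
    note bound = field_differentiable_bound[OF convex_ball this, of _ t]
    show ?case
      using bound \<open>d > 0\<close> by simp
  qed
  have integrable_near: "integrable M (f s)" if "s \<in> ball t d" for s
  proof (rule Bochner_Integration.integrable_bound)
    show "integrable M (\<lambda>x. \<bar>f t x\<bar> + w x * \<bar>s - t\<bar>)"
      using int \<open>integrable M w\<close> by auto
    show "AE x in M. norm (f s x) \<le> norm (\<bar>f t x\<bar> + w x * \<bar>s - t\<bar>)"
      using lipschitz by eventually_elim (use that in force)
  qed (use meas that in auto)
  have near: "\<forall>\<^sub>F s in at t. s \<in> ball t d \<and> s \<noteq> t"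
    using eventually_at_ball'[OF \<open>d > 0\<close>, of t UNIV] by simp
  have quotient: "\<forall>\<^sub>F s in at t. integral\<^sup>L M (\<lambda>x. (f s x - f t x) / (s - t))
                         = (integral\<^sup>L M (f s) - integral\<^sup>L M (f t)) / (s - t)"
    using near by eventually_elim (use int integrable_near in simp)
  have "((\<lambda>s. integral\<^sup>L M (\<lambda>x. (f s x - f t x) / (s - t))) \<longlongrightarrow> integral\<^sup>L M (f' t)) (at t)"
  proof (rule integral_dominated_convergence_at_within[where w = w])
    show "\<forall>\<^sub>F s in at t. (\<lambda>x. (f s x - f t x) / (s - t)) \<in> borel_measurable M"
      using near by eventually_elim (use meas \<open>d > 0\<close> in auto)
    show "AE x in M. ((\<lambda>s. (f s x - f t x) / (s - t)) \<longlongrightarrow> f' t x) (at t)"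
      using deriv by eventually_elim (use \<open>d > 0\<close> in \<open>auto simp: has_field_derivative_iff\<close>)
    show "\<forall>\<^sub>F s in at t. AE x in M. norm ((f s x - f t x) / (s - t)) \<le> w x"
      using near
    proof eventually_elim
      case (elim s)
      show ?case
        using lipschitz by eventually_elim (use elim in \<open>auto simp: abs_divide divide_le_eq\<close>)
    qed
  qed fact+
  then show ?thesis
    unfolding has_field_derivative_iff by (rule Lim_transform_eventually[OF _ quotient])
qed

lemma has_real_derivative_set_integral:
  fixes f f' :: "real \<Rightarrow> 'a \<Rightarrow> real"
  assumes "d > 0"
    and meas: "\<And>s. s \<in> ball t d \<Longrightarrow> set_borel_measurable M A (f s)"
    and "set_borel_measurable M A (f' t)" and "set_integrable M A (f t)" and "set_integrable M A w"
    and deriv: "\<And>s x. s \<in> ball t d \<Longrightarrow> x \<in> A \<Longrightarrow> ((\<lambda>s. f s x) has_real_derivative f' s x) (at s)"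
    and bound: "\<And>s x. s \<in> ball t d \<Longrightarrow> x \<in> A \<Longrightarrow> \<bar>f' s x\<bar> \<le> w x"
  shows "((\<lambda>s. LINT x:A|M. f s x) has_real_derivative (LINT x:A|M. f' t x)) (at t)"
  unfolding set_lebesgue_integral_def
proof (rule has_real_derivative_integral[where w = "\<lambda>x. indicator A x * w x"])
  show "AE x in M. \<forall>s\<in>ball t d. ((\<lambda>s. indicator A x *\<^sub>R f s x) has_real_derivative
          indicator A x *\<^sub>R f' s x) (at s) \<and> \<bar>indicator A x *\<^sub>R f' s x\<bar> \<le> indicator A x * w x"
    by (rule AE_I2) (auto simp: indicator_def deriv bound)
qed (use assms in \<open>auto simp: set_borel_measurable_def set_integrable_def\<close>)

lemma set_integral_Ioi_FTC:
  fixes F f :: "real \<Rightarrow> real"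
  assumes cont: "continuous_on {a..} F"
    and deriv: "\<And>x. x > a \<Longrightarrow> (F has_real_derivative f x) (at x)"
    and int: "set_integrable lborel {a<..} f"
    and lim: "(F \<longlongrightarrow> L) at_top"
  shows "(LBINT x:{a<..}. f x) = L - F a"
proof -
  have finite: "(LBINT x:{a<..<b}. f x) = F b - F a" if "b > a" for b
  proof -
    have "(f has_integral (F b - F a)) {a..b}"
      by (rule fundamental_theorem_of_calculus_interior)
         (use that cont deriv in \<open>auto intro: continuous_on_subset
            simp: has_real_derivative_iff_has_vector_derivative[symmetric]\<close>)
    then have "integral {a<..<b} f = F b - F a"
      by (simp add: has_integral_Icc_iff_Ioo integral_unique)
    moreover have "set_integrable lborel {a<..<b} f"
      by (rule set_integrable_subset[OF int]) auto
    ultimately show ?thesis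
      by (simp add: set_borel_integral_eq_integral(2))
  qed
  have "((\<lambda>b. LBINT x:{a<..<b}. f x) \<longlongrightarrow> (LBINT x:{a<..}. f x)) at_top"
    unfolding set_lebesgue_integral_def
  proof (rule integral_dominated_convergence_at_top[where w = "\<lambda>x. norm (indicator {a<..} x *\<^sub>R f x)"])
    show "(\<lambda>x. indicator {a<..<b} x *\<^sub>R f x) \<in> borel_measurable lborel" for b
      using set_integrable_subset[OF int, of "{a<..<b}"] borel_measurable_integrable
      by (force simp: set_integrable_def)
    show "AE x in lborel. ((\<lambda>b. indicator {a<..<b} x *\<^sub>R f x) \<longlongrightarrow> indicator {a<..} x *\<^sub>R f x) at_top"
    proof (rule AE_I2)
      fix x :: real
      show "((\<lambda>b. indicator {a<..<b} x *\<^sub>R f x) \<longlongrightarrow> indicator {a<..} x *\<^sub>R f x) at_top"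
        by (rule tendsto_eventually, rule eventually_mono[OF eventually_gt_at_top[of x]])
           (auto simp: indicator_def)
    qed
  qed (use int in \<open>auto simp: set_integrable_def indicator_def\<close>)
  moreover have "((\<lambda>b. LBINT x:{a<..<b}. f x) \<longlongrightarrow> L - F a) at_top"
    using tendsto_diff[OF lim tendsto_const] eventually_gt_at_top[of a]
    by (rule Lim_transform_eventually[OF _ eventually_mono]) (simp add: finite)
  ultimately show ?thesis
    using tendsto_unique by force
qed

lemma set_integral_Ici_eq_Ioi:
  fixes f g :: "real \<Rightarrow> real"
  assumes meas: "set_borel_measurable lborel {a<..} f" and eq: "\<And>x. x > a \<Longrightarrow> g x = f x"
  shows "(LBINT x:{a..}. g x) = (LBINT x:{a<..}. f x)"
  unfolding set_lebesgue_integral_def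
proof (rule integral_cong_AE)
  have "(\<lambda>x. indicator {a..} x *\<^sub>R g x) = (\<lambda>x. indicator {a<..} x *\<^sub>R f x + indicator {a} x * g a)"
    using eq by (auto simp: indicator_def fun_eq_iff)
  then show "(\<lambda>x. indicator {a..} x *\<^sub>R g x) \<in> borel_measurable lborel"
    using meas by (simp add: set_borel_measurable_def)
  show "AE x in lborel. indicator {a..} x *\<^sub>R g x = indicator {a<..} x *\<^sub>R f x"
    using AE_lborel_singleton[of a] by eventually_elim (auto simp: eq indicator_def)
qed (use meas in \<open>simp add: set_borel_measurable_def\<close>)

lemma set_borel_measurable_continuous_on:
  fixes f :: "'a::euclidean_space \<Rightarrow> 'b::real_normed_vector"
  assumes "A \<in> sets borel" and "continuous_on A f"
  shows "set_borel_measurable lborel A f"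
  using set_measurable_continuous_on[OF assms] by (simp add: set_borel_measurable_def)

lemma set_borel_measurable_set_integral:
  fixes h :: "real \<Rightarrow> real \<Rightarrow> real"
  assumes "U \<in> sets borel" and "V \<in> sets borel" and cont: "continuous_on (U \<times> V) (\<lambda>(z, y). h z y)"
  shows "set_borel_measurable lborel V (\<lambda>y. LBINT z:U. h z y)"
proof -
  have "(\<lambda>p. indicator (U \<times> V) p *\<^sub>R (\<lambda>(z, y). h z y) p) \<in> borel_measurable borel"
    using assms by (intro borel_measurable_continuous_on_indicator borel_Times)
  then have "(\<lambda>p. indicator (U \<times> V) p *\<^sub>R (\<lambda>(z, y). h z y) p) \<in> borel_measurable (lborel \<Otimes>\<^sub>M lborel)"
    by (simp add: lborel_prod measurable_lborel2)
  from measurable_compose[OF measurable_pair_swap' this]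
  have "(\<lambda>(y, z). indicator (U \<times> V) (z, y) * h z y) \<in> borel_measurable (lborel \<Otimes>\<^sub>M lborel)"
    by (simp add: case_prod_unfold)
  then have "(\<lambda>y. \<integral>z. indicator (U \<times> V) (z, y) * h z y \<partial>lborel) \<in> borel_measurable lborel"
    by (intro lborel.borel_measurable_lebesgue_integral) (simp add: case_prod_beta')
  moreover have "(\<lambda>y. \<integral>z. indicator (U \<times> V) (z, y) * h z y \<partial>lborel)
      = (\<lambda>y. indicator V y *\<^sub>R (LBINT z:U. h z y))"
    by (auto simp: fun_eq_iff set_lebesgue_integral_def indicator_def)
  ultimately show ?thesis
    by (simp add: set_borel_measurable_def)
qed

lemma integrable_const_divide_1_plus_square: "integrable lborel (\<lambda>x::real. c / (1 + x\<^sup>2))"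
proof -
  have "integrable lborel (\<lambda>x::real. inverse (1 + x\<^sup>2))"
    using integrable_inverse_1_plus_square by (simp add: set_integrable_def)
  then show ?thesis
    by (simp add: divide_inverse)
qed

lemma set_integrable_const_divide_1_plus_square:
  "A \<in> sets lborel \<Longrightarrow> set_integrable lborel A (\<lambda>x::real. c / (1 + x\<^sup>2))"
  unfolding set_integrable_def
  by (rule integrable_mult_indicator[OF _ integrable_const_divide_1_plus_square])

lemma set_integrable_inverse_square_bound:
  fixes f :: "real \<Rightarrow> real"
  assumes "A \<in> sets borel" and "set_borel_measurable lborel A f"
    and bound: "\<And>x. x \<in> A \<Longrightarrow> \<bar>f x\<bar> \<le> B / (1 + x\<^sup>2)"
  shows "set_integrable lborel A f"
proof (rule set_integrable_bound[OF set_integrable_const_divide_1_plus_square assms(2)])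
  show "AE x in lborel. x \<in> A \<longrightarrow> norm (f x) \<le> norm (B / (1 + x\<^sup>2))"
  proof (rule AE_I2, rule impI)
    fix x assume "x \<in> A"
    then have "\<bar>f x\<bar> \<le> \<bar>B / (1 + x\<^sup>2)\<bar>"
      using bound abs_ge_self order_trans by blast
    then show "norm (f x) \<le> norm (B / (1 + x\<^sup>2))"
      by simp
  qed
qed (use assms(1) in simp)

lemma abs_set_integral_le:
  fixes f g :: "'a \<Rightarrow> real"
  assumes f: "set_integrable M A f" and "set_integrable M A g" and "\<And>x. x \<in> A \<Longrightarrow> \<bar>f x\<bar> \<le> g x"
  shows "\<bar>LINT x:A|M. f x\<bar> \<le> (LINT x:A|M. g x)"
proof -
  have "\<bar>LINT x:A|M. f x\<bar> \<le> (LINT x:A|M. \<bar>f x\<bar>)"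
    using set_integral_norm_bound[OF f] by simp
  also have "\<dots> \<le> (LINT x:A|M. g x)"
    by (rule set_integral_mono[OF set_integrable_abs[OF f]]) (use assms in auto)
  finally show ?thesis .
qed

lemma tendsto_set_integral_at_within:
  fixes f :: "real \<Rightarrow> real \<Rightarrow> real"
  assumes meas: "\<And>y. y \<in> S - {x} \<Longrightarrow> set_borel_measurable lborel A (f y)"
    and w: "set_integrable lborel A w"
    and bound: "\<And>y z. y \<in> S - {x} \<Longrightarrow> z \<in> A \<Longrightarrow> \<bar>f y z\<bar> \<le> w z"
    and lim: "\<And>z. z \<in> A \<Longrightarrow> ((\<lambda>y. f y z) \<longlongrightarrow> 0) (at x within S)"
  shows "((\<lambda>y. LBINT z:A. f y z) \<longlongrightarrow> 0) (at x within S)"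
proof -
  have near: "\<forall>\<^sub>F y in at x within S. y \<in> S - {x}"
    by (simp add: eventually_at_filter)
  have "((\<lambda>y. integral\<^sup>L lborel (\<lambda>z. indicator A z *\<^sub>R f y z)) \<longlongrightarrow> integral\<^sup>L lborel (\<lambda>z::real. 0::real))
      (at x within S)"
  proof (rule integral_dominated_convergence_at_within[where w = "\<lambda>z. indicator A z * w z"])
    show "AE z in lborel. ((\<lambda>y. indicator A z *\<^sub>R f y z) \<longlongrightarrow> 0) (at x within S)"
      by (rule AE_I2) (simp add: indicator_def lim)
  qed (use near meas w bound in \<open>auto simp: set_borel_measurable_def set_integrable_def indicator_def
         elim!: eventually_mono\<close>)
  then show ?thesis
    by (simp add: set_lebesgue_integral_def)
qed

lemma tendsto_set_integral_at_top:
  fixes f :: "real \<Rightarrow> real \<Rightarrow> real"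
  assumes meas: "\<And>y. y \<ge> c \<Longrightarrow> set_borel_measurable lborel A (f y)"
    and w: "set_integrable lborel A w"
    and bound: "\<And>y z. y \<ge> c \<Longrightarrow> z \<in> A \<Longrightarrow> \<bar>f y z\<bar> \<le> w z"
    and lim: "\<And>z. z \<in> A \<Longrightarrow> ((\<lambda>y. f y z) \<longlongrightarrow> 0) at_top"
  shows "((\<lambda>y. LBINT z:A. f y z) \<longlongrightarrow> 0) at_top"
proof -
  \<comment> \<open>The library's dominated convergence along \<open>at_top\<close> needs every \<open>f y\<close> measurable,
    hence the detour through \<open>f (max c y)\<close>.\<close>
  have "((\<lambda>y. integral\<^sup>L lborel (\<lambda>z. indicator A z *\<^sub>R f (max c y) z)) \<longlongrightarrow>
      integral\<^sup>L lborel (\<lambda>z::real. 0::real)) at_top"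
  proof (rule integral_dominated_convergence_at_top[where w = "\<lambda>z. indicator A z * w z"])
    show "AE z in lborel. ((\<lambda>y. indicator A z *\<^sub>R f (max c y) z) \<longlongrightarrow> 0) at_top"
    proof (rule AE_I2)
      fix z
      have "((\<lambda>y. f (max c y) z) \<longlongrightarrow> 0) at_top" if "z \<in> A"
        by (rule Lim_transform_eventually[OF lim[OF that]],
            rule eventually_mono[OF eventually_ge_at_top[of c]]) simp
      then show "((\<lambda>y. indicator A z *\<^sub>R f (max c y) z) \<longlongrightarrow> 0) at_top"
        by (simp add: indicator_def)
    qed
  qed (use meas w bound in \<open>auto simp: set_borel_measurable_def set_integrable_def indicator_def\<close>)
  moreover have "\<forall>\<^sub>F y in at_top. integral\<^sup>L lborel (\<lambda>z. indicator A z *\<^sub>R f (max c y) z)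
      = (LBINT z:A. f y z)"
    using eventually_ge_at_top[of c] by eventually_elim (simp add: set_lebesgue_integral_def max_absorb2)
  ultimately show ?thesis
    by (simp add: tendsto_cong)
qed

lemma continuous_on_slice_fst:
  assumes "continuous_on S (\<lambda>(x, y). f x y)" and "\<And>x. x \<in> A \<Longrightarrow> (x, y) \<in> S"
  shows "continuous_on A (\<lambda>x. f x y)"
proof -
  have "continuous_on A (\<lambda>x. (\<lambda>(x, y). f x y) (x, y))"
    by (rule continuous_on_compose2[OF assms(1)]) (use assms(2) in \<open>auto intro!: continuous_intros\<close>)
  then show ?thesis
    by simp
qed

lemma continuous_on_slice_snd:
  assumes "continuous_on S (\<lambda>(x, y). f x y)" and "\<And>y. y \<in> B \<Longrightarrow> (x, y) \<in> S"
  shows "continuous_on B (f x)"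
proof -
  have "continuous_on B (\<lambda>y. (\<lambda>(x, y). f x y) (x, y))"
    by (rule continuous_on_compose2[OF assms(1)]) (use assms(2) in \<open>auto intro!: continuous_intros\<close>)
  then show ?thesis
    by simp
qed

lemma iterated_set_integral_Ici_eq_Ioi:
  fixes f :: "real \<Rightarrow> real \<Rightarrow> real"
  assumes cont: "continuous_on ({a<..} \<times> {b<..}) (\<lambda>(z, y). f z y)"
  shows "(LBINT y:{b..}. LBINT z:{a..}. f z y) = (LBINT y:{b<..}. LBINT z:{a<..}. f z y)"
proof (rule set_integral_Ici_eq_Ioi)
  show "set_borel_measurable lborel {b<..} (\<lambda>y. LBINT z:{a<..}. f z y)"
    by (rule set_borel_measurable_set_integral[OF _ _ cont]) auto
  show "(LBINT z:{a..}. f z y) = (LBINT z:{a<..}. f z y)" if "y > b" for y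
  proof (rule set_integral_Ici_eq_Ioi)
    show "set_borel_measurable lborel {a<..} (\<lambda>z. f z y)"
      by (rule set_borel_measurable_continuous_on, simp, rule continuous_on_slice_fst[OF cont])
         (use that in auto)
  qed simp
qed

lemma set_integrable_abs_le_mult:
  fixes f v :: "real \<Rightarrow> real"
  assumes U: "U \<in> sets borel" and cont: "continuous_on U f" and v: "set_integrable lborel U v"
    and bound: "\<And>z. z \<in> U \<Longrightarrow> \<bar>f z\<bar> \<le> v z * c"
  shows "set_integrable lborel U f" and "\<bar>LBINT z:U. f z\<bar> \<le> (LBINT z:U. v z) * c"
proof -
  show f: "set_integrable lborel U f"
  proof (rule set_integrable_bound[OF set_integrable_mult_left[where a = c, OF v]])
    show "set_borel_measurable lborel U f"
      using U cont by (rule set_borel_measurable_continuous_on)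
  qed (use bound in \<open>auto intro!: AE_I2 intro: order_trans[OF _ abs_ge_self]\<close>)
  show "\<bar>LBINT z:U. f z\<bar> \<le> (LBINT z:U. v z) * c"
    using abs_set_integral_le[OF f set_integrable_mult_left[where a = c, OF v]] bound by simp
qed

lemma has_real_derivative_iterated_set_integral:
  fixes f f' :: "real \<Rightarrow> real \<Rightarrow> real \<Rightarrow> real" and v w :: "real \<Rightarrow> real"
  assumes "d > 0" and U: "U \<in> sets borel" and V: "V \<in> sets borel"
    and cont: "\<And>s. s \<in> ball t d \<Longrightarrow> continuous_on (U \<times> V) (\<lambda>(z, y). f s z y)"
    and cont': "\<And>s. s \<in> ball t d \<Longrightarrow> continuous_on (U \<times> V) (\<lambda>(z, y). f' s z y)"
    and deriv: "\<And>s z y. s \<in> ball t d \<Longrightarrow> z \<in> U \<Longrightarrow> y \<in> V \<Longrightarrow>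
                  ((\<lambda>s. f s z y) has_real_derivative f' s z y) (at s)"
    and bound: "\<And>s z y. s \<in> ball t d \<Longrightarrow> z \<in> U \<Longrightarrow> y \<in> V \<Longrightarrow>
                  \<bar>f s z y\<bar> \<le> v z * w y \<and> \<bar>f' s z y\<bar> \<le> v z * w y"
    and v: "set_integrable lborel U v" and w: "set_integrable lborel V w"
  shows "((\<lambda>s. LBINT y:V. LBINT z:U. f s z y) has_real_derivative
           (LBINT y:V. LBINT z:U. f' t z y)) (at t)"
proof -
  have slice: "continuous_on U (\<lambda>z. g z y)" if "continuous_on (U \<times> V) (\<lambda>(z, y). g z y)" "y \<in> V"
    for g y
    by (rule continuous_on_slice_fst[OF that(1)]) (use that(2) in auto)
  have "t \<in> ball t d"
    using \<open>d > 0\<close> by simp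
  show ?thesis
  proof (rule has_real_derivative_set_integral[OF \<open>d > 0\<close>, where w = "\<lambda>y. (LBINT z:U. v z) * w y"])
    fix s y assume s: "s \<in> ball t d" and y: "y \<in> V"
    define e where "e = d - dist t s"
    have "e > 0"
      using s by (simp add: e_def)
    have ball: "ball s e \<subseteq> ball t d"
      by (simp add: ball_subset_ball_iff e_def dist_commute)
    note f = set_integrable_abs_le_mult[OF U slice[OF cont y] v]
    note f' = set_integrable_abs_le_mult[OF U slice[OF cont' y] v]
    show "((\<lambda>s. LBINT z:U. f s z y) has_real_derivative (LBINT z:U. f' s z y)) (at s)"
    proof (rule has_real_derivative_set_integral[OF \<open>e > 0\<close>, where w = "\<lambda>z. v z * w y"])
      show "set_borel_measurable lborel U (\<lambda>z. f r z y)" if "r \<in> ball s e" for r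
        using U slice[OF cont y] that ball by (intro set_borel_measurable_continuous_on) auto
      show "set_borel_measurable lborel U (\<lambda>z. f' s z y)"
        using U slice[OF cont' y] s by (intro set_borel_measurable_continuous_on) auto
      show "set_integrable lborel U (\<lambda>z. f s z y)"
        using f(1)[of s] s y bound by auto
    qed (use s y ball bound deriv v in auto)
    show "\<bar>LBINT z:U. f' s z y\<bar> \<le> (LBINT z:U. v z) * w y"
      using f'(2)[of s] s y bound by auto
  next
    show "set_integrable lborel V (\<lambda>y. LBINT z:U. f t z y)"
    proof (rule set_integrable_bound[OF set_integrable_mult_right[where a = "LBINT z:U. v z", OF w]])
      show "AE y in lborel. y \<in> V \<longrightarrow> norm (LBINT z:U. f t z y) \<le> norm ((LBINT z:U. v z) * w y)"
        using set_integrable_abs_le_mult(2)[OF U slice[OF cont] v] bound \<open>t \<in> ball t d\<close>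
        by (auto intro!: AE_I2 intro: order_trans[OF _ abs_ge_self])
    qed (rule set_borel_measurable_set_integral[OF U V cont[OF \<open>t \<in> ball t d\<close>]])
  qed (use U V w cont cont' \<open>t \<in> ball t d\<close> set_borel_measurable_set_integral in auto)
qed

lemma abs_le_square_plus_one: "\<bar>x\<bar> \<le> 1 + x\<^sup>2" for x :: real
proof (cases "\<bar>x\<bar> \<le> 1")
  case False
  then have "1 * \<bar>x\<bar> \<le> \<bar>x\<bar> * \<bar>x\<bar>"
    by (intro mult_right_mono) auto
  then show ?thesis
    by (simp add: power2_eq_square)
qed (use zero_le_power2[of x] in linarith)

lemma nonneg_of_abs_le_divide_square:
  fixes J C N :: real
  assumes "\<bar>J\<bar> \<le> C / N\<^sup>2" and "N \<noteq> 0"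
  shows "C \<ge> 0"
proof -
  have "0 \<le> C / N\<^sup>2"
    using assms(1) abs_ge_zero order_trans by blast
  moreover have "0 \<le> N\<^sup>2"
    by simp
  ultimately have "0 \<le> C / N\<^sup>2 * N\<^sup>2"
    by (rule mult_nonneg_nonneg)
  then show ?thesis
    using assms(2) by simp
qed

lemma abs_affine_mult_le_decay:
  fixes u v C J \<alpha> \<beta> \<gamma> :: real
  assumes J: "\<bar>J\<bar> \<le> C / (1 + u\<^sup>2 + v\<^sup>2)\<^sup>2"
  shows "\<bar>(\<alpha> + \<beta> * u + \<gamma> * v) * J\<bar> \<le> (\<bar>\<alpha>\<bar> + \<bar>\<beta>\<bar> + \<bar>\<gamma>\<bar>) * C / (1 + u\<^sup>2)"
    and "\<bar>(\<alpha> + \<beta> * u + \<gamma> * v) * J\<bar> \<le> (\<bar>\<alpha>\<bar> + \<bar>\<beta>\<bar> + \<bar>\<gamma>\<bar>) * C / (1 + v\<^sup>2)"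
proof -
  define N where "N = 1 + u\<^sup>2 + v\<^sup>2"
  have N: "N \<ge> 1" "\<bar>u\<bar> \<le> N" "\<bar>v\<bar> \<le> N" "1 + u\<^sup>2 \<le> N" "1 + v\<^sup>2 \<le> N"
    using abs_le_square_plus_one[of u] abs_le_square_plus_one[of v] zero_le_power2[of u]
      zero_le_power2[of v] unfolding N_def by linarith+
  have "C \<ge> 0"
    using nonneg_of_abs_le_divide_square[OF J] N(1) unfolding N_def by simp
  have "\<bar>\<alpha> + \<beta> * u + \<gamma> * v\<bar> \<le> \<bar>\<alpha>\<bar> + \<bar>\<beta>\<bar> * \<bar>u\<bar> + \<bar>\<gamma>\<bar> * \<bar>v\<bar>"
    using abs_triangle_ineq[of "\<alpha> + \<beta> * u" "\<gamma> * v"] abs_triangle_ineq[of \<alpha> "\<beta> * u"]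
    by (simp add: abs_mult)
  also have "\<dots> \<le> \<bar>\<alpha>\<bar> * N + \<bar>\<beta>\<bar> * N + \<bar>\<gamma>\<bar> * N"
    using mult_left_mono[OF N(1), of "\<bar>\<alpha>\<bar>"] mult_left_mono[OF N(2), of "\<bar>\<beta>\<bar>"]
      mult_left_mono[OF N(3), of "\<bar>\<gamma>\<bar>"] by simp
  finally have "\<bar>(\<alpha> + \<beta> * u + \<gamma> * v) * J\<bar> \<le> (\<bar>\<alpha>\<bar> + \<bar>\<beta>\<bar> + \<bar>\<gamma>\<bar>) * N * (C / N\<^sup>2)"
    using J unfolding N_def[symmetric] abs_mult
    by (intro mult_mono) (auto simp: algebra_simps)
  also have "\<dots> = (\<bar>\<alpha>\<bar> + \<bar>\<beta>\<bar> + \<bar>\<gamma>\<bar>) * C / N"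
    using N(1) by (simp add: power2_eq_square)
  finally have bound: "\<bar>(\<alpha> + \<beta> * u + \<gamma> * v) * J\<bar> \<le> (\<bar>\<alpha>\<bar> + \<bar>\<beta>\<bar> + \<bar>\<gamma>\<bar>) * C / N" .
  have "0 \<le> (\<bar>\<alpha>\<bar> + \<bar>\<beta>\<bar> + \<bar>\<gamma>\<bar>) * C"
    using \<open>C \<ge> 0\<close> by simp
  moreover have "0 < N * (1 + u\<^sup>2)" and "0 < N * (1 + v\<^sup>2)"
    using N(1) zero_le_power2[of u] zero_le_power2[of v] by (intro mult_pos_pos; linarith)+
  ultimately show "\<bar>(\<alpha> + \<beta> * u + \<gamma> * v) * J\<bar> \<le> (\<bar>\<alpha>\<bar> + \<bar>\<beta>\<bar> + \<bar>\<gamma>\<bar>) * C / (1 + u\<^sup>2)"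
    and "\<bar>(\<alpha> + \<beta> * u + \<gamma> * v) * J\<bar> \<le> (\<bar>\<alpha>\<bar> + \<bar>\<beta>\<bar> + \<bar>\<gamma>\<bar>) * C / (1 + v\<^sup>2)"
    using N(4,5) by (auto intro: order.trans[OF bound] divide_left_mono)
qed

lemma abs_le_decay_product:
  fixes u v C J :: real
  assumes J: "\<bar>J\<bar> \<le> C / (1 + u\<^sup>2 + v\<^sup>2)\<^sup>2"
  shows "\<bar>J\<bar> \<le> 1 / (1 + u\<^sup>2) * (C / (1 + v\<^sup>2))"
proof -
  have pos: "0 < 1 + u\<^sup>2" "0 < 1 + v\<^sup>2" "0 < 1 + u\<^sup>2 + v\<^sup>2"
    using zero_le_power2[of u] zero_le_power2[of v] by linarith+
  have "(1 + u\<^sup>2) * (1 + v\<^sup>2) \<le> (1 + u\<^sup>2 + v\<^sup>2)\<^sup>2"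
    unfolding power2_eq_square[of "1 + u\<^sup>2 + v\<^sup>2"] using pos by (intro mult_mono) auto
  moreover have "C \<ge> 0"
    using nonneg_of_abs_le_divide_square[OF J] pos(3) by simp
  moreover have "0 < (1 + u\<^sup>2 + v\<^sup>2)\<^sup>2 * ((1 + u\<^sup>2) * (1 + v\<^sup>2))"
    using pos by simp
  ultimately have "C / (1 + u\<^sup>2 + v\<^sup>2)\<^sup>2 \<le> C / ((1 + u\<^sup>2) * (1 + v\<^sup>2))"
    by (rule divide_left_mono)
  then show ?thesis
    using J by simp
qed

lemma abs_le_decay_drop:
  fixes u v C J :: real
  assumes J: "\<bar>J\<bar> \<le> C / (1 + u\<^sup>2 + v\<^sup>2)\<^sup>2"
  shows "\<bar>J\<bar> \<le> C / (1 + u\<^sup>2)\<^sup>2"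
proof -
  have pos: "0 < 1 + u\<^sup>2" "1 + u\<^sup>2 \<le> 1 + u\<^sup>2 + v\<^sup>2" "0 < 1 + u\<^sup>2 + v\<^sup>2"
    using zero_le_power2[of u] zero_le_power2[of v] by linarith+
  then have "C \<ge> 0"
    using nonneg_of_abs_le_divide_square[OF J] by simp
  moreover have "(1 + u\<^sup>2)\<^sup>2 \<le> (1 + u\<^sup>2 + v\<^sup>2)\<^sup>2"
    using pos by (intro power_mono) auto
  ultimately have "C / (1 + u\<^sup>2 + v\<^sup>2)\<^sup>2 \<le> C / (1 + u\<^sup>2)\<^sup>2"
    using pos by (intro divide_left_mono) auto
  with J show ?thesis
    by linarith
qed

lemma tendsto_zero_inverse_square_bound:
  fixes F :: "real \<Rightarrow> real"
  assumes "\<forall>\<^sub>F x in at_top. \<bar>F x\<bar> \<le> c / (1 + x\<^sup>2)"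
  shows "(F \<longlongrightarrow> 0) at_top"
proof (rule Lim_null_comparison)
  show "((\<lambda>x. c / (1 + x\<^sup>2)) \<longlongrightarrow> 0) at_top"
    by real_asymp
qed (use assms in simp)

lemma has_real_derivative_mult_deriv:
  fixes c f :: "real \<Rightarrow> real"
  assumes "(c has_real_derivative c') (at x)" and "f differentiable (at x)"
  shows "((\<lambda>w. c w * f w) has_real_derivative c' * f x + c x * deriv f x) (at x)"
proof -
  have "(f has_real_derivative deriv f x) (at x)"
    using assms(2) by (simp add: DERIV_deriv_iff_real_differentiable)
  from DERIV_mult[OF assms(1) this] show ?thesis
    by (simp only: mult.commute[of "deriv f x" "c x"])
qed

lemma has_real_derivative_affine_flux:
  fixes u :: "real \<Rightarrow> real"
  assumes "u differentiable (at z)"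
  shows "((\<lambda>w. (\<beta> * w - \<alpha>) * u w) has_real_derivative \<beta> * u z + (\<beta> * z - \<alpha>) * deriv u z) (at z)"
proof -
  have "((\<lambda>w. \<beta> * w - \<alpha>) has_real_derivative \<beta>) (at z)"
    by (auto intro!: derivative_eq_intros)
  from has_real_derivative_mult_deriv[OF this assms] show ?thesis .
qed

lemma set_integrable_Ioi_flux:
  fixes u :: "real \<Rightarrow> real"
  assumes cont: "continuous_on {a<..} u" and cont': "continuous_on {a<..} (deriv u)"
    and diff: "\<And>z. z > a \<Longrightarrow> u differentiable (at z)"
    and decay: "\<And>z. z > a \<Longrightarrow> \<bar>u z\<bar> \<le> B / (1 + z\<^sup>2)\<^sup>2 \<and> \<bar>deriv u z\<bar> \<le> B / (1 + z\<^sup>2)\<^sup>2"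
  shows "set_integrable lborel {a<..} (\<lambda>z. deriv (\<lambda>w. (\<beta> * w - \<alpha>) * u w) z)"
proof -
  have "set_integrable lborel {a<..} (\<lambda>z. \<beta> * u z + (\<beta> * z - \<alpha>) * deriv u z)"
  proof (rule set_integrable_inverse_square_bound)
    show "set_borel_measurable lborel {a<..} (\<lambda>z. \<beta> * u z + (\<beta> * z - \<alpha>) * deriv u z)"
      using cont cont' by (intro set_borel_measurable_continuous_on continuous_intros) auto
    show "\<bar>\<beta> * u z + (\<beta> * z - \<alpha>) * deriv u z\<bar> \<le> (\<bar>\<beta>\<bar> * B + (\<bar>\<alpha>\<bar> + \<bar>\<beta>\<bar>) * B) / (1 + z\<^sup>2)"
      if "z \<in> {a<..}" for z
    proof -
      have "\<bar>\<beta> * u z\<bar> \<le> \<bar>\<beta>\<bar> * B / (1 + z\<^sup>2)"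
        using abs_affine_mult_le_decay(1)[of "u z" B z 0 \<beta> 0 0] decay[of z] that by simp
      moreover have "\<bar>(\<beta> * z - \<alpha>) * deriv u z\<bar> \<le> (\<bar>\<alpha>\<bar> + \<bar>\<beta>\<bar>) * B / (1 + z\<^sup>2)"
        using abs_affine_mult_le_decay(1)[of "deriv u z" B z 0 "- \<alpha>" \<beta> 0] decay[of z] that by simp
      ultimately show ?thesis
        using abs_triangle_ineq[of "\<beta> * u z" "(\<beta> * z - \<alpha>) * deriv u z"]
        unfolding add_divide_distrib by linarith
    qed
  qed auto
  moreover have "deriv (\<lambda>w. (\<beta> * w - \<alpha>) * u w) z = \<beta> * u z + (\<beta> * z - \<alpha>) * deriv u z"
    if "z \<in> {a<..}" for z
    using DERIV_imp_deriv[OF has_real_derivative_affine_flux[OF diff]] that by simp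
  ultimately show ?thesis
    by (subst set_integrable_cong[OF refl refl]) auto
qed

lemma set_integral_Ioi_flux:
  fixes u :: "real \<Rightarrow> real"
  assumes cont: "continuous_on {a..} u" and cont': "continuous_on {a<..} (deriv u)"
    and diff: "\<And>z. z > a \<Longrightarrow> u differentiable (at z)"
    and decay: "\<And>z. z > a \<Longrightarrow> \<bar>u z\<bar> \<le> B / (1 + z\<^sup>2)\<^sup>2 \<and> \<bar>deriv u z\<bar> \<le> B / (1 + z\<^sup>2)\<^sup>2"
  shows "set_integrable lborel {a<..} (\<lambda>z. deriv (\<lambda>w. (\<beta> * w - \<alpha>) * u w) z)"
    and "(LBINT z:{a<..}. deriv (\<lambda>w. (\<beta> * w - \<alpha>) * u w) z) = - (\<beta> * a - \<alpha>) * u a"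
proof -
  show integrable: "set_integrable lborel {a<..} (\<lambda>z. deriv (\<lambda>w. (\<beta> * w - \<alpha>) * u w) z)"
    by (rule set_integrable_Ioi_flux[OF continuous_on_subset[OF cont] cont' diff decay]) auto
  have "(LBINT z:{a<..}. deriv (\<lambda>w. (\<beta> * w - \<alpha>) * u w) z) = 0 - (\<beta> * a - \<alpha>) * u a"
  proof (rule set_integral_Ioi_FTC[OF _ _ integrable])
    show "continuous_on {a..} (\<lambda>w. (\<beta> * w - \<alpha>) * u w)"
      using cont by (intro continuous_intros)
    show "((\<lambda>w. (\<beta> * w - \<alpha>) * u w) has_real_derivative deriv (\<lambda>w. (\<beta> * w - \<alpha>) * u w) z) (at z)"
      if "z > a" for z
    proof -
      note flux = has_real_derivative_affine_flux[OF diff[OF that], of \<beta> \<alpha>]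
      then show ?thesis
        by (simp only: DERIV_imp_deriv[OF flux])
    qed
    show "((\<lambda>w. (\<beta> * w - \<alpha>) * u w) \<longlongrightarrow> 0) at_top"
    proof (rule tendsto_zero_inverse_square_bound)
      show "\<forall>\<^sub>F z in at_top. \<bar>(\<beta> * z - \<alpha>) * u z\<bar> \<le> (\<bar>\<alpha>\<bar> + \<bar>\<beta>\<bar>) * B / (1 + z\<^sup>2)"
        using eventually_gt_at_top[of a]
      proof eventually_elim
        case (elim z)
        then show ?case
          using abs_affine_mult_le_decay(1)[of "u z" B z 0 "- \<alpha>" \<beta> 0] decay[of z] by simp
      qed
    qed
  qed
  then show "(LBINT z:{a<..}. deriv (\<lambda>w. (\<beta> * w - \<alpha>) * u w) z) = - (\<beta> * a - \<alpha>) * u a"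
    by (simp add: algebra_simps)
qed

lemma has_real_derivative_transverse_flux:
  fixes J :: "real \<Rightarrow> real \<Rightarrow> real"
  assumes cont: "\<And>y. y > 0 \<Longrightarrow> continuous_on {a<..} (\<lambda>z. J z y)"
    and cont': "\<And>y. y > 0 \<Longrightarrow> continuous_on {a<..} (\<lambda>z. deriv (J z) y)"
    and diff: "\<And>z y. z > a \<Longrightarrow> y > 0 \<Longrightarrow> J z differentiable (at y)"
    and decay: "\<And>z y. z > a \<Longrightarrow> y > 0 \<Longrightarrow>
                  \<bar>J z y\<bar> \<le> C / (1 + z\<^sup>2 + y\<^sup>2)\<^sup>2 \<and> \<bar>deriv (J z) y\<bar> \<le> C / (1 + z\<^sup>2 + y\<^sup>2)\<^sup>2"
    and "y > 0"
  shows "((\<lambda>y. LBINT z:{a<..}. (\<alpha> * y + \<beta> * z) * J z y) has_real_derivative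
           (LBINT z:{a<..}. deriv (\<lambda>w. (\<alpha> * w + \<beta> * z) * J z w) y)) (at y)"
proof -
  let ?flux' = "\<lambda>s z. \<alpha> * J z s + (\<alpha> * s + \<beta> * z) * deriv (J z) s"
  have flux: "((\<lambda>w. (\<alpha> * w + \<beta> * z) * J z w) has_real_derivative ?flux' s z) (at s)"
    if "z > a" "s > 0" for z s
  proof -
    have "((\<lambda>w. \<alpha> * w + \<beta> * z) has_real_derivative \<alpha>) (at s)"
      by (auto intro!: derivative_eq_intros)
    from has_real_derivative_mult_deriv[OF this diff[OF that]] show ?thesis .
  qed
  have meas: "set_borel_measurable lborel {a<..} (\<lambda>z. (\<alpha> * s + \<beta> * z) * J z s)" if "s > 0" for s
    using cont[OF that] by (intro set_borel_measurable_continuous_on continuous_intros) auto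
  have weighted: "\<bar>(\<alpha> * s + \<beta> * z) * K\<bar> \<le> (\<bar>\<alpha>\<bar> + \<bar>\<beta>\<bar>) * C / (1 + z\<^sup>2)"
    if "\<bar>K\<bar> \<le> C / (1 + z\<^sup>2 + s\<^sup>2)\<^sup>2" for K z s
    using abs_affine_mult_le_decay(1)[OF that, of 0 \<beta> \<alpha>] by (simp add: add.commute)
  have ball: "s > 0" if "s \<in> ball y y" for s
    using that by (auto simp: dist_real_def)
  have "((\<lambda>y. LBINT z:{a<..}. (\<alpha> * y + \<beta> * z) * J z y) has_real_derivative
          (LBINT z:{a<..}. ?flux' y z)) (at y)"
  proof (rule has_real_derivative_set_integral[OF \<open>y > 0\<close>,
        where w = "\<lambda>z. (\<bar>\<alpha>\<bar> + (\<bar>\<alpha>\<bar> + \<bar>\<beta>\<bar>)) * C / (1 + z\<^sup>2)"])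
    show "set_borel_measurable lborel {a<..} (?flux' y)"
      using cont[OF \<open>y > 0\<close>] cont'[OF \<open>y > 0\<close>]
      by (intro set_borel_measurable_continuous_on continuous_intros) auto
    show "set_integrable lborel {a<..} (\<lambda>z. (\<alpha> * y + \<beta> * z) * J z y)"
      using meas[OF \<open>y > 0\<close>] weighted decay \<open>y > 0\<close>
      by (intro set_integrable_inverse_square_bound[where B = "(\<bar>\<alpha>\<bar> + \<bar>\<beta>\<bar>) * C"]) auto
    show "\<bar>?flux' s z\<bar> \<le> (\<bar>\<alpha>\<bar> + (\<bar>\<alpha>\<bar> + \<bar>\<beta>\<bar>)) * C / (1 + z\<^sup>2)"
      if "s \<in> ball y y" "z \<in> {a<..}" for s z
    proof -
      have "\<bar>\<alpha> * J z s\<bar> \<le> \<bar>\<alpha>\<bar> * C / (1 + z\<^sup>2)"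
        using abs_affine_mult_le_decay(1)[of "J z s" C z s \<alpha> 0 0] decay[of z s] ball that by simp
      moreover have "\<bar>(\<alpha> * s + \<beta> * z) * deriv (J z) s\<bar> \<le> (\<bar>\<alpha>\<bar> + \<bar>\<beta>\<bar>) * C / (1 + z\<^sup>2)"
        using weighted decay[of z s] ball that by simp
      ultimately show ?thesis
        using abs_triangle_ineq[of "\<alpha> * J z s" "(\<alpha> * s + \<beta> * z) * deriv (J z) s"]
        unfolding distrib_right add_divide_distrib by linarith
    qed
  qed (use meas ball flux set_integrable_const_divide_1_plus_square in auto)
  also have "(LBINT z:{a<..}. ?flux' y z) = (LBINT z:{a<..}. deriv (\<lambda>w. (\<alpha> * w + \<beta> * z) * J z w) y)"
    using DERIV_imp_deriv[OF flux] \<open>y > 0\<close> by (intro set_lebesgue_integral_cong) auto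
  finally show ?thesis .
qed

lemma transverse_flux_limits:
  fixes J :: "real \<Rightarrow> real \<Rightarrow> real"
  assumes cont_y: "\<And>z. z > a \<Longrightarrow> continuous_on {0..} (J z)"
    and cont_z: "\<And>y. y > 0 \<Longrightarrow> continuous_on {a<..} (\<lambda>z. J z y)"
    and decay: "\<And>z y. z > a \<Longrightarrow> y > 0 \<Longrightarrow> \<bar>J z y\<bar> \<le> C / (1 + z\<^sup>2 + y\<^sup>2)\<^sup>2"
    and zero: "\<And>z. z > a \<Longrightarrow> J z 0 = 0"
  shows "((\<lambda>y. LBINT z:{a<..}. (\<alpha> * y + \<beta> * z) * J z y) \<longlongrightarrow> 0) (at 0 within {0..})"
    and "((\<lambda>y. LBINT z:{a<..}. (\<alpha> * y + \<beta> * z) * J z y) \<longlongrightarrow> 0) at_top"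
proof -
  have bound: "\<bar>(\<alpha> * y + \<beta> * z) * J z y\<bar> \<le> (\<bar>\<alpha>\<bar> + \<bar>\<beta>\<bar>) * C / (1 + z\<^sup>2)"
    and bound_y: "\<bar>(\<alpha> * y + \<beta> * z) * J z y\<bar> \<le> (\<bar>\<alpha>\<bar> + \<bar>\<beta>\<bar>) * C / (1 + y\<^sup>2)"
    if "z > a" "y > 0" for z y
    using abs_affine_mult_le_decay[of "J z y" C z y 0 \<beta> \<alpha>] decay[OF that] by (simp_all add: add.commute)
  have meas: "set_borel_measurable lborel {a<..} (\<lambda>z. (\<alpha> * y + \<beta> * z) * J z y)" if "y > 0" for y
    using cont_z[OF that] by (intro set_borel_measurable_continuous_on continuous_intros) auto
  have w: "set_integrable lborel {a<..} (\<lambda>z. (\<bar>\<alpha>\<bar> + \<bar>\<beta>\<bar>) * C / (1 + z\<^sup>2))"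
    by (rule set_integrable_const_divide_1_plus_square) simp
  show "((\<lambda>y. LBINT z:{a<..}. (\<alpha> * y + \<beta> * z) * J z y) \<longlongrightarrow> 0) (at 0 within {0..})"
  proof (rule tendsto_set_integral_at_within[OF meas w bound])
    show "((\<lambda>y. (\<alpha> * y + \<beta> * z) * J z y) \<longlongrightarrow> 0) (at 0 within {0..})" if "z \<in> {a<..}" for z
    proof -
      have "((\<lambda>y. (\<alpha> * y + \<beta> * z) * J z y) \<longlongrightarrow> (\<alpha> * 0 + \<beta> * z) * J z 0) (at 0 within {0..})"
        using cont_y that by (intro tendsto_intros) (auto simp: continuous_on_def)
      then show ?thesis
        using zero that by simp
    qed
  qed auto
  show "((\<lambda>y. LBINT z:{a<..}. (\<alpha> * y + \<beta> * z) * J z y) \<longlongrightarrow> 0) at_top"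
  proof (rule tendsto_set_integral_at_top[where c = 1, OF meas w bound])
    show "((\<lambda>y. (\<alpha> * y + \<beta> * z) * J z y) \<longlongrightarrow> 0) at_top" if "z \<in> {a<..}" for z
    proof (rule tendsto_zero_inverse_square_bound)
      show "\<forall>\<^sub>F y in at_top. \<bar>(\<alpha> * y + \<beta> * z) * J z y\<bar> \<le> (\<bar>\<alpha>\<bar> + \<bar>\<beta>\<bar>) * C / (1 + y\<^sup>2)"
        using eventually_gt_at_top[of 0] by eventually_elim (use bound_y that in auto)
    qed
  qed auto
qed

lemma set_integral_transverse_flux:
  fixes J :: "real \<Rightarrow> real \<Rightarrow> real"
  assumes cont_y: "\<And>z. z > a \<Longrightarrow> continuous_on {0..} (J z)"
    and cont_z: "\<And>y. y > 0 \<Longrightarrow> continuous_on {a<..} (\<lambda>z. J z y)"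
    and cont_z': "\<And>y. y > 0 \<Longrightarrow> continuous_on {a<..} (\<lambda>z. deriv (J z) y)"
    and diff: "\<And>z y. z > a \<Longrightarrow> y > 0 \<Longrightarrow> J z differentiable (at y)"
    and decay: "\<And>z y. z > a \<Longrightarrow> y > 0 \<Longrightarrow>
                  \<bar>J z y\<bar> \<le> C / (1 + z\<^sup>2 + y\<^sup>2)\<^sup>2 \<and> \<bar>deriv (J z) y\<bar> \<le> C / (1 + z\<^sup>2 + y\<^sup>2)\<^sup>2"
    and zero: "\<And>z. z > a \<Longrightarrow> J z 0 = 0"
    and int: "set_integrable lborel {0<..} (\<lambda>y. LBINT z:{a<..}. deriv (\<lambda>w. (\<alpha> * w + \<beta> * z) * J z w) y)"
  shows "(LBINT y:{0<..}. LBINT z:{a<..}. deriv (\<lambda>w. (\<alpha> * w + \<beta> * z) * J z w) y) = 0"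
proof -
  let ?K = "\<lambda>y. LBINT z:{a<..}. (\<alpha> * y + \<beta> * z) * J z y"
  note deriv = has_real_derivative_transverse_flux[OF cont_z cont_z' diff decay]
  note limits = transverse_flux_limits[OF cont_y cont_z _ zero, of C \<alpha> \<beta>]
  have "?K 0 = 0"
    using zero by (simp add: set_lebesgue_integral_cong[of "{a<..}" lborel _ "\<lambda>_. 0"])
  have "continuous (at y within {0..}) ?K" if "y \<in> {0..}" for y
  proof (cases "y = 0")
    case True
    then show ?thesis
      using limits(1) decay \<open>?K 0 = 0\<close> by (simp add: continuous_within)
  next
    case False
    then show ?thesis
      using that DERIV_isCont[OF deriv] by (auto intro: continuous_at_imp_continuous_at_within)
  qed
  then have "continuous_on {0..} ?K"
    by (simp add: continuous_on_eq_continuous_within)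
  from set_integral_Ioi_FTC[OF this deriv int limits(2)] decay \<open>?K 0 = 0\<close> show ?thesis
    by simp
qed

lemma set_integrable_boundary_flux:
  fixes J :: "real \<Rightarrow> real \<Rightarrow> real"
  assumes cont: "\<And>y. y > 0 \<Longrightarrow> continuous_on {a..} (\<lambda>z. J z y)"
    and cont_a: "continuous_on {0<..} (J a)"
    and decay: "\<And>z y. z > a \<Longrightarrow> y > 0 \<Longrightarrow> \<bar>J z y\<bar> \<le> C / (1 + z\<^sup>2 + y\<^sup>2)\<^sup>2"
  shows "set_integrable lborel {0<..} (\<lambda>y. (\<gamma> - \<delta> * y) * J a y)"
proof (rule set_integrable_inverse_square_bound)
  show "set_borel_measurable lborel {0<..} (\<lambda>y. (\<gamma> - \<delta> * y) * J a y)"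
    using cont_a by (intro set_borel_measurable_continuous_on continuous_intros) auto
  show "\<bar>(\<gamma> - \<delta> * y) * J a y\<bar> \<le> (\<bar>\<gamma>\<bar> + \<bar>\<delta>\<bar>) * C / (1 + y\<^sup>2)" if "y \<in> {0<..}" for y
  proof -
    have "norm (J a y) \<le> C / (1 + y\<^sup>2)\<^sup>2"
    proof (rule continuous_on_closure_norm_le[of "{a<..}" "\<lambda>z. J z y"])
      show "continuous_on (closure {a<..}) (\<lambda>z. J z y)"
        using cont that by simp
      show "\<forall>z\<in>{a<..}. norm (J z y) \<le> C / (1 + y\<^sup>2)\<^sup>2"
      proof
        fix z assume "z \<in> {a<..}"
        then have "\<bar>J z y\<bar> \<le> C / (1 + y\<^sup>2 + z\<^sup>2)\<^sup>2"
          using decay[of z y] that by (simp add: add_ac)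
        from abs_le_decay_drop[OF this] show "norm (J z y) \<le> C / (1 + y\<^sup>2)\<^sup>2"
          by simp
      qed
    qed simp
    then show ?thesis
      using abs_affine_mult_le_decay(1)[of "J a y" C y 0 \<gamma> "- \<delta>" 0] by simp
  qed
qed auto

lemma set_integral_Ioi_transport:
  fixes u ut q :: "real \<Rightarrow> real"
  assumes cont: "continuous_on {a..} u" and cont': "continuous_on {a<..} (deriv u)"
    and diff: "\<And>z. z > a \<Longrightarrow> u differentiable (at z)"
    and decay: "\<And>z. z > a \<Longrightarrow> \<bar>u z\<bar> \<le> B / (1 + z\<^sup>2)\<^sup>2 \<and> \<bar>deriv u z\<bar> \<le> B / (1 + z\<^sup>2)\<^sup>2"
    and ut: "set_integrable lborel {a<..} ut"
    and transport: "\<And>z. z > a \<Longrightarrow> ut z + deriv (\<lambda>w. (\<beta> * w - \<alpha>) * u w) z + q z = 0"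
  shows "(LBINT z:{a<..}. ut z) = (\<beta> * a - \<alpha>) * u a - (LBINT z:{a<..}. q z)"
proof -
  let ?D = "\<lambda>z. deriv (\<lambda>w. (\<beta> * w - \<alpha>) * u w) z"
  note flux = set_integral_Ioi_flux[OF cont cont' diff decay, of \<beta> \<alpha>]
  have "(LBINT z:{a<..}. q z) = (LBINT z:{a<..}. - (ut z + ?D z))"
  proof (rule set_lebesgue_integral_cong, simp, intro allI impI)
    fix z assume "z \<in> {a<..}"
    then show "q z = - (ut z + ?D z)"
      using transport[of z] by simp
  qed
  also have "\<dots> = - ((LBINT z:{a<..}. ut z) + (LBINT z:{a<..}. ?D z))"
    using set_integral_uminus[OF set_integral_add(1)[OF ut flux(1)]] set_integral_add(2)[OF ut flux(1)]
    by (simp only:)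
  finally show ?thesis
    using flux(2) by (simp add: algebra_simps)
qed

lemma set_integral_transport_quadrant:
  fixes J Jt :: "real \<Rightarrow> real \<Rightarrow> real"
  assumes cont: "continuous_on {(z, y). z \<ge> a \<and> y \<ge> 0 \<and> (z, y) \<noteq> (a, 0)} (\<lambda>(z, y). J z y)"
    and cont_t: "continuous_on ({a<..} \<times> {0<..}) (\<lambda>(z, y). Jt z y)"
    and cont_z: "continuous_on ({a<..} \<times> {0<..}) (\<lambda>(z, y). deriv (\<lambda>w. J w y) z)"
    and cont_y: "continuous_on ({a<..} \<times> {0<..}) (\<lambda>(z, y). deriv (J z) y)"
    and diff: "\<And>z y. z > a \<Longrightarrow> y > 0 \<Longrightarrow> (\<lambda>w. J w y) differentiable (at z) \<and> J z differentiable (at y)"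
    and transport: "\<And>z y. z > a \<Longrightarrow> y > 0 \<Longrightarrow>
          Jt z y + deriv (\<lambda>w. (a1 * w - a2 * y) * J w y) z + deriv (\<lambda>w. (- a3 * w + a4 * z) * J z w) y = 0"
    and zero: "\<And>z. z > a \<Longrightarrow> J z 0 = 0"
    and decay: "\<And>z y. z > a \<Longrightarrow> y > 0 \<Longrightarrow>
          \<bar>J z y\<bar> \<le> C / (1 + z\<^sup>2 + y\<^sup>2)\<^sup>2 \<and> \<bar>Jt z y\<bar> \<le> C / (1 + z\<^sup>2 + y\<^sup>2)\<^sup>2 \<and>
          \<bar>deriv (\<lambda>w. J w y) z\<bar> \<le> C / (1 + z\<^sup>2 + y\<^sup>2)\<^sup>2 \<and> \<bar>deriv (J z) y\<bar> \<le> C / (1 + z\<^sup>2 + y\<^sup>2)\<^sup>2"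
  shows "set_integrable lborel {0<..} (\<lambda>y. (a1 * a - a2 * y) * J a y)"
    and "(LBINT y:{0<..}. LBINT z:{a<..}. Jt z y) = (LBINT y:{0<..}. (a1 * a - a2 * y) * J a y)"
proof -
  let ?Q = "\<lambda>y. LBINT z:{a<..}. Jt z y"
  let ?F = "\<lambda>y. (a1 * a - a2 * y) * J a y"
  let ?K' = "\<lambda>y. LBINT z:{a<..}. deriv (\<lambda>w. (- a3 * w + a4 * z) * J z w) y"
  have cont_zslice: "continuous_on {a..} (\<lambda>z. J z y)" if "y > 0" for y
    by (rule continuous_on_slice_fst[OF cont]) (use that in auto)
  show boundary: "set_integrable lborel {0<..} ?F"
    using continuous_on_slice_snd[OF cont, of "{0<..}" a] decay
    by (intro set_integrable_boundary_flux[OF cont_zslice]) auto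
  have Jt: "set_integrable lborel {a<..} (\<lambda>z. Jt z y)"
    and Q_bound: "\<bar>?Q y\<bar> \<le> (LBINT z:{a<..}. 1 / (1 + z\<^sup>2)) * (C / (1 + y\<^sup>2))" if "y > 0" for y
    using set_integrable_abs_le_mult[OF _ continuous_on_slice_fst[OF cont_t]
        set_integrable_const_divide_1_plus_square, of "{a<..}" y 1 "C / (1 + y\<^sup>2)"]
      that decay abs_le_decay_product by auto
  have slice: "?Q y = ?F y - ?K' y" if "y > 0" for y
  proof (rule set_integral_Ioi_transport[OF cont_zslice[OF that] _ _ _ Jt[OF that], where B = C])
    show "continuous_on {a<..} (deriv (\<lambda>w. J w y))"
      by (rule continuous_on_slice_fst[OF cont_z]) (use that in auto)
    show "\<bar>J z y\<bar> \<le> C / (1 + z\<^sup>2)\<^sup>2 \<and> \<bar>deriv (\<lambda>w. J w y) z\<bar> \<le> C / (1 + z\<^sup>2)\<^sup>2" if "z > a" for z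
      using decay[OF that \<open>y > 0\<close>] abs_le_decay_drop by blast
  qed (use diff transport that in auto)
  have Q: "set_integrable lborel {0<..} ?Q"
  proof (rule set_integrable_inverse_square_bound)
    show "set_borel_measurable lborel {0<..} ?Q"
      by (rule set_borel_measurable_set_integral[OF _ _ cont_t]) auto
  qed (use Q_bound in auto)
  \<comment> \<open>Integrability of the y-flux is not assumed: by the slice identity it is \<open>?F - ?Q\<close>.\<close>
  have "set_integrable lborel {0<..} ?K' = set_integrable lborel {0<..} (\<lambda>y. ?F y - ?Q y)"
    by (rule set_integrable_cong) (auto simp: slice)
  then have K': "set_integrable lborel {0<..} ?K'"
    using set_integral_diff(1)[OF boundary Q] by simp
  have K'_zero: "(LBINT y:{0<..}. ?K' y) = 0"
  proof (rule set_integral_transverse_flux[OF _ _ _ _ _ zero K', where C = C])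
    show "continuous_on {0..} (J z)" if "z > a" for z
      by (rule continuous_on_slice_snd[OF cont]) (use that in auto)
    show "continuous_on {a<..} (\<lambda>z. J z y)" if "y > 0" for y
      using cont_zslice[OF that] by (rule continuous_on_subset) auto
    show "continuous_on {a<..} (\<lambda>z. deriv (J z) y)" if "y > 0" for y
      by (rule continuous_on_slice_fst[OF cont_y]) (use that in auto)
  qed (use diff decay in auto)
  have "(LBINT y:{0<..}. ?Q y) = (LBINT y:{0<..}. ?F y - ?K' y)"
    by (rule set_lebesgue_integral_cong) (auto simp: slice)
  also have "\<dots> = (LBINT y:{0<..}. ?F y) - (LBINT y:{0<..}. ?K' y)"
    by (rule set_integral_diff(2)[OF boundary K'])
  finally show "(LBINT y:{0<..}. ?Q y) = (LBINT y:{0<..}. ?F y)"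
    by (simp only: K'_zero diff_zero)
qed

lemma infected_mass_balance:
  fixes I :: "real \<Rightarrow> real \<Rightarrow> real \<Rightarrow> real" and t :: real
  assumes I_cont: "continuous_on {(t, z, y). t > 0 \<and> z \<ge> z0 \<and> y \<ge> 0 \<and> (z, y) \<noteq> (z0, 0)}
                   (\<lambda>(t, z, y). I t z y)"
    and I_diff: "\<And>t z y. t > 0 \<Longrightarrow> z > z0 \<Longrightarrow> y > 0 \<Longrightarrow>
                   (\<lambda>s. I s z y) differentiable (at t) \<and>
                   (\<lambda>w. I t w y) differentiable (at z) \<and>
                   (\<lambda>w. I t z w) differentiable (at y)"
    and I_C1: "continuous_on ({0<..} \<times> {z0<..} \<times> {0<..}) (\<lambda>(t, z, y). deriv (\<lambda>s. I s z y) t)"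
              "continuous_on ({0<..} \<times> {z0<..} \<times> {0<..}) (\<lambda>(t, z, y). deriv (\<lambda>w. I t w y) z)"
              "continuous_on ({0<..} \<times> {z0<..} \<times> {0<..}) (\<lambda>(t, z, y). deriv (\<lambda>w. I t z w) y)"
    and I_pde: "\<And>t z y. t > 0 \<Longrightarrow> z > z0 \<Longrightarrow> y > 0 \<Longrightarrow>
                   deriv (\<lambda>s. I s z y) t
                 + deriv (\<lambda>w. (a1 * w - a2 * y) * I t w y) z
                 + deriv (\<lambda>w. (- a3 * w + a4 * z) * I t z w) y = 0"
    and I_bc_y0: "\<And>t z. t > 0 \<Longrightarrow> z > z0 \<Longrightarrow> I t z 0 = 0"
    and I_decay: "\<And>t1 t2. 0 < t1 \<Longrightarrow> t1 \<le> t2 \<Longrightarrow> \<exists>C. \<forall>t z y.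
                   t \<in> {t1..t2} \<and> z > z0 \<and> y > 0 \<longrightarrow>
                     \<bar>I t z y\<bar> \<le> C / (1 + z\<^sup>2 + y\<^sup>2)\<^sup>2 \<and>
                     \<bar>deriv (\<lambda>s. I s z y) t\<bar> \<le> C / (1 + z\<^sup>2 + y\<^sup>2)\<^sup>2 \<and>
                     \<bar>deriv (\<lambda>w. I t w y) z\<bar> \<le> C / (1 + z\<^sup>2 + y\<^sup>2)\<^sup>2 \<and>
                     \<bar>deriv (\<lambda>w. I t z w) y\<bar> \<le> C / (1 + z\<^sup>2 + y\<^sup>2)\<^sup>2"
    and "t > 0"
  shows "set_integrable lborel {0<..} (\<lambda>y. (a1 * z0 - a2 * y) * I t z0 y)"
    and "((\<lambda>s. LBINT y:{0..}. LBINT z:{z0..}. I s z y) has_real_derivative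
           (LBINT y:{0<..}. (a1 * z0 - a2 * y) * I t z0 y)) (at t)"
proof -
  obtain C where C: "\<And>s z y. s \<in> {t/2..2*t} \<Longrightarrow> z > z0 \<Longrightarrow> y > 0 \<Longrightarrow>
      \<bar>I s z y\<bar> \<le> C / (1 + z\<^sup>2 + y\<^sup>2)\<^sup>2 \<and> \<bar>deriv (\<lambda>s. I s z y) s\<bar> \<le> C / (1 + z\<^sup>2 + y\<^sup>2)\<^sup>2 \<and>
      \<bar>deriv (\<lambda>w. I s w y) z\<bar> \<le> C / (1 + z\<^sup>2 + y\<^sup>2)\<^sup>2 \<and> \<bar>deriv (\<lambda>w. I s z w) y\<bar> \<le> C / (1 + z\<^sup>2 + y\<^sup>2)\<^sup>2"
    using I_decay[of "t/2" "2*t"] \<open>t > 0\<close> by auto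
  have tin: "t \<in> {t/2..2*t}"
    using \<open>t > 0\<close> by simp
  have near: "s \<in> {t/2..2*t} \<and> s > 0" if "s \<in> ball t (t/2)" for s
    using that \<open>t > 0\<close> unfolding mem_ball dist_real_def atLeastAtMost_iff by arith
  have cont_t: "continuous_on {(z, y). z \<ge> z0 \<and> y \<ge> 0 \<and> (z, y) \<noteq> (z0, 0)} (\<lambda>(z, y). I s z y)"
    if "s > 0" for s
    by (rule continuous_on_slice_snd[OF I_cont]) (use that in auto)
  have cont_quadrant: "continuous_on ({z0<..} \<times> {0<..}) (\<lambda>(z, y). I s z y)" if "s > 0" for s
    by (rule continuous_on_subset[OF cont_t[OF that]]) auto
  have cont_deriv: "continuous_on ({z0<..} \<times> {0<..}) (\<lambda>(z, y). D s z y)"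
    if "continuous_on ({0<..} \<times> {z0<..} \<times> {0<..}) (\<lambda>(t, z, y). D t z y)" "s > 0" for D s
    by (rule continuous_on_slice_snd[OF that(1)]) (use that(2) in auto)
  note transport = set_integral_transport_quadrant[OF cont_t[OF \<open>t > 0\<close>]
      cont_deriv[OF I_C1(1)] cont_deriv[OF I_C1(2)] cont_deriv[OF I_C1(3)], where C = C]
  show "set_integrable lborel {0<..} (\<lambda>y. (a1 * z0 - a2 * y) * I t z0 y)"
    by (rule transport(1)) (use I_diff I_pde I_bc_y0 C[OF tin] \<open>t > 0\<close> in auto)
  have "((\<lambda>s. LBINT y:{0<..}. LBINT z:{z0<..}. I s z y) has_real_derivative
           (LBINT y:{0<..}. LBINT z:{z0<..}. deriv (\<lambda>s. I s z y) t)) (at t)"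
  proof (rule has_real_derivative_iterated_set_integral[where d = "t/2"
        and v = "\<lambda>z. 1 / (1 + z\<^sup>2)" and w = "\<lambda>y. C / (1 + y\<^sup>2)"])
    show "((\<lambda>s. I s z y) has_real_derivative deriv (\<lambda>s. I s z y) s) (at s)"
      if "s \<in> ball t (t/2)" "z \<in> {z0<..}" "y \<in> {0<..}" for s z y
      using I_diff[of s z y] near[OF that(1)] that by (simp add: DERIV_deriv_iff_real_differentiable)
    show "\<bar>I s z y\<bar> \<le> 1 / (1 + z\<^sup>2) * (C / (1 + y\<^sup>2)) \<and>
          \<bar>deriv (\<lambda>s. I s z y) s\<bar> \<le> 1 / (1 + z\<^sup>2) * (C / (1 + y\<^sup>2))"
      if "s \<in> ball t (t/2)" "z \<in> {z0<..}" "y \<in> {0<..}" for s z y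
      using C[of s z y] near[OF that(1)] that abs_le_decay_product by auto
  qed (use \<open>t > 0\<close> near cont_quadrant cont_deriv[OF I_C1(1)] set_integrable_const_divide_1_plus_square
       in auto)
  also have "(LBINT y:{0<..}. LBINT z:{z0<..}. deriv (\<lambda>s. I s z y) t)
      = (LBINT y:{0<..}. (a1 * z0 - a2 * y) * I t z0 y)"
    by (rule transport(2)) (use I_diff I_pde I_bc_y0 C[OF tin] \<open>t > 0\<close> in auto)
  finally have deriv: "((\<lambda>s. LBINT y:{0<..}. LBINT z:{z0<..}. I s z y) has_real_derivative
           (LBINT y:{0<..}. (a1 * z0 - a2 * y) * I t z0 y)) (at t)" .
  have ev: "\<forall>\<^sub>F s in nhds t. (LBINT y:{0..}. LBINT z:{z0..}. I s z y)
                             = (LBINT y:{0<..}. LBINT z:{z0<..}. I s z y)"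
    using eventually_nhds_in_open[of "{0<..}" t] \<open>t > 0\<close>
    by (auto elim!: eventually_mono intro: iterated_set_integral_Ici_eq_Ioi cont_quadrant)
  show "((\<lambda>s. LBINT y:{0..}. LBINT z:{z0..}. I s z y) has_real_derivative
           (LBINT y:{0<..}. (a1 * z0 - a2 * y) * I t z0 y)) (at t)"
    by (subst DERIV_cong_ev[OF refl ev refl]) (rule deriv)
qed

lemma recovered_mass_balance:
  fixes R h :: "real \<Rightarrow> real \<Rightarrow> real" and t :: real
  assumes R_cont: "continuous_on {(t, y). t > 0 \<and> y \<ge> y0} (\<lambda>(t, y). R t y)"
    and R_diff: "\<And>t y. t > 0 \<Longrightarrow> y > y0 \<Longrightarrow>
                   (\<lambda>s. R s y) differentiable (at t) \<and> (\<lambda>w. R t w) differentiable (at y)"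
    and R_C1: "continuous_on ({0<..} \<times> {y0<..}) (\<lambda>(t, y). deriv (\<lambda>s. R s y) t)"
              "continuous_on ({0<..} \<times> {y0<..}) (\<lambda>(t, y). deriv (\<lambda>w. R t w) y)"
    and R_pde: "\<And>t y. t > 0 \<Longrightarrow> y > y0 \<Longrightarrow>
                   deriv (\<lambda>s. R s y) t - deriv (\<lambda>w. a5 * w * R t w) y = - h t y"
    and R_decay: "\<And>t1 t2. 0 < t1 \<Longrightarrow> t1 \<le> t2 \<Longrightarrow> \<exists>C. \<forall>t y.
                   t \<in> {t1..t2} \<and> y > y0 \<longrightarrow>
                     \<bar>R t y\<bar> \<le> C / (1 + y\<^sup>2)\<^sup>2 \<and>
                     \<bar>deriv (\<lambda>s. R s y) t\<bar> \<le> C / (1 + y\<^sup>2)\<^sup>2 \<and>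
                     \<bar>deriv (\<lambda>w. R t w) y\<bar> \<le> C / (1 + y\<^sup>2)\<^sup>2"
    and source: "set_integrable lborel {y0<..} (h t)"
    and "t > 0"
  shows "((\<lambda>s. LBINT y:{y0..}. R s y) has_real_derivative
           - a5 * y0 * R t y0 - (LBINT y:{y0<..}. h t y)) (at t)"
proof -
  obtain C where C: "\<And>s y. s \<in> {t/2..2*t} \<Longrightarrow> y > y0 \<Longrightarrow>
      \<bar>R s y\<bar> \<le> C / (1 + y\<^sup>2)\<^sup>2 \<and> \<bar>deriv (\<lambda>s. R s y) s\<bar> \<le> C / (1 + y\<^sup>2)\<^sup>2 \<and>
      \<bar>deriv (\<lambda>w. R s w) y\<bar> \<le> C / (1 + y\<^sup>2)\<^sup>2"
    using R_decay[of "t/2" "2*t"] \<open>t > 0\<close> by auto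
  have tin: "t \<in> {t/2..2*t}"
    using \<open>t > 0\<close> by simp
  have near: "s \<in> {t/2..2*t} \<and> s > 0" if "s \<in> ball t (t/2)" for s
    using that \<open>t > 0\<close> unfolding mem_ball dist_real_def atLeastAtMost_iff by arith
  have bound: "\<bar>J\<bar> \<le> C / (1 + y\<^sup>2)" if "\<bar>J\<bar> \<le> C / (1 + y\<^sup>2)\<^sup>2" for J y
    using abs_affine_mult_le_decay(1)[of J C y 0 1 0 0] that by simp
  have cont: "continuous_on {y0..} (R s)" if "s > 0" for s
    by (rule continuous_on_slice_snd[OF R_cont]) (use that in auto)
  have cont': "continuous_on {y0<..} (\<lambda>y. D s y)"
    if "continuous_on ({0<..} \<times> {y0<..}) (\<lambda>(t, y). D t y)" "s > 0" for D s
    by (rule continuous_on_slice_snd[OF that(1)]) (use that(2) in auto)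
  have meas: "set_borel_measurable lborel {y0<..} (R s)" if "s > 0" for s
    by (rule set_borel_measurable_continuous_on, simp, rule continuous_on_subset[OF cont[OF that]]) auto
  have "((\<lambda>s. LBINT y:{y0<..}. R s y) has_real_derivative (LBINT y:{y0<..}. deriv (\<lambda>s. R s y) t)) (at t)"
  proof (rule has_real_derivative_set_integral[where d = "t/2" and w = "\<lambda>y. C / (1 + y\<^sup>2)"])
    show "set_borel_measurable lborel {y0<..} (\<lambda>y. deriv (\<lambda>s. R s y) t)"
      using cont'[OF R_C1(1) \<open>t > 0\<close>] by (intro set_borel_measurable_continuous_on) auto
    show "set_integrable lborel {y0<..} (R t)"
      using meas[OF \<open>t > 0\<close>] C[OF tin] bound by (intro set_integrable_inverse_square_bound) auto
    show "((\<lambda>s. R s y) has_real_derivative deriv (\<lambda>s. R s y) s) (at s)"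
      if "s \<in> ball t (t/2)" "y \<in> {y0<..}" for s y
      using R_diff[of s y] near[OF that(1)] that by (simp add: DERIV_deriv_iff_real_differentiable)
  qed (use \<open>t > 0\<close> near meas C bound set_integrable_const_divide_1_plus_square in auto)
  also have "(LBINT y:{y0<..}. deriv (\<lambda>s. R s y) t)
      = (LBINT y:{y0<..}. deriv (\<lambda>w. a5 * w * R t w) y - h t y)"
    using R_pde[OF \<open>t > 0\<close>] by (intro set_lebesgue_integral_cong) (auto simp: algebra_simps)
  also have "\<dots> = - a5 * y0 * R t y0 - (LBINT y:{y0<..}. h t y)"
  proof -
    note flux = set_integral_Ioi_flux[OF cont[OF \<open>t > 0\<close>] cont'[OF R_C1(2) \<open>t > 0\<close>], where B = C
        and \<beta> = a5 and \<alpha> = 0]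
    have "set_integrable lborel {y0<..} (\<lambda>y. deriv (\<lambda>w. a5 * w * R t w) y)"
      and "(LBINT y:{y0<..}. deriv (\<lambda>w. a5 * w * R t w) y) = - a5 * y0 * R t y0"
      using flux R_diff[OF \<open>t > 0\<close>] C[OF tin] by auto
    then show ?thesis
      using set_integral_diff(2)[OF _ source] by simp
  qed
  finally have deriv: "((\<lambda>s. LBINT y:{y0<..}. R s y) has_real_derivative
      - a5 * y0 * R t y0 - (LBINT y:{y0<..}. h t y)) (at t)" .
  have ev: "\<forall>\<^sub>F s in nhds t. (LBINT y:{y0..}. R s y) = (LBINT y:{y0<..}. R s y)"
    using eventually_nhds_in_open[of "{0<..}" t] \<open>t > 0\<close>
    by (auto elim!: eventually_mono intro: set_integral_Ici_eq_Ioi[OF meas])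
  show ?thesis
    by (subst DERIV_cong_ev[OF refl ev refl]) (rule deriv)
qed

lemma set_integral_Ioi_split:
  fixes f :: "real \<Rightarrow> real"
  assumes f: "set_integrable lborel {a<..} f" and "a \<le> b"
  shows "(LBINT x:{a<..}. f x) = (LBINT x:{a<..b}. f x) + (LBINT x:{b<..}. f x)"
proof -
  have "{a<..} = {a<..b} \<union> {b<..}"
    using \<open>a \<le> b\<close> by auto
  then have "(LBINT x:{a<..}. f x) = (LBINT x:{a<..b} \<union> {b<..}. f x)"
    by simp
  also have "\<dots> = (LBINT x:{a<..b}. f x) + (LBINT x:{b<..}. f x)"
    by (rule set_integral_Un) (use \<open>a \<le> b\<close> in \<open>auto intro: set_integrable_subset[OF f]\<close>)
  finally show ?thesis .
qed

lemma set_integral_affine_mult_density: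
  fixes g :: "real \<Rightarrow> real"
  assumes g: "set_integrable lborel {0..b} g" and mass: "(LBINT y:{0..b}. g y) = 1"
    and mean: "m = (LBINT y:{0..b}. y * g y)"
  shows "(LBINT y:{0<..b}. (c - \<beta> * y) * g y) = c - \<beta> * m"
proof -
  have "(\<lambda>y. indicator {0..b} y *\<^sub>R g y) \<in> borel_measurable lborel"
    using g by (simp add: set_integrable_def borel_measurable_integrable)
  then have "set_borel_measurable lborel {0..b} (\<lambda>y. y * g y)"
    unfolding set_borel_measurable_def by (simp add: mult.left_commute[of _ y for y])
  then have yg: "set_integrable lborel {0..b} (\<lambda>y. y * g y)"
    by (rule set_integrable_bound[OF set_integrable_mult_right[where a = b, OF g]])
       (auto intro!: AE_I2 mult_right_mono simp: abs_mult)
  have "set_integrable lborel {0..b} (\<lambda>y. c * g y - \<beta> * (y * g y))"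
    using g yg by auto
  also have "?this \<longleftrightarrow> set_integrable lborel {0..b} (\<lambda>y. (c - \<beta> * y) * g y)"
    by (rule set_integrable_cong) (auto simp: algebra_simps)
  finally have int: "set_integrable lborel {0..b} (\<lambda>y. (c - \<beta> * y) * g y)" .
  have measurable: "set_borel_measurable lborel A (\<lambda>y. (c - \<beta> * y) * g y)"
    if "A \<in> sets lborel" "A \<subseteq> {0..b}" for A
    using set_integrable_subset[OF int that] unfolding set_integrable_def set_borel_measurable_def
    by (rule borel_measurable_integrable)
  have "(LBINT y:{0<..b}. (c - \<beta> * y) * g y) = (LBINT y:{0..b}. (c - \<beta> * y) * g y)"
    by (rule set_integral_cong_set[OF measurable measurable])
       (use AE_lborel_singleton[of 0] in \<open>auto elim!: eventually_mono\<close>)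
  also have "\<dots> = (LBINT y:{0..b}. c * g y - \<beta> * (y * g y))"
    by (rule set_lebesgue_integral_cong) (auto simp: algebra_simps)
  also have "\<dots> = c - \<beta> * m"
    using g yg mass mean by simp
  finally show ?thesis .
qed

lemma boundary_influx_eq:
  fixes g u :: "real \<Rightarrow> real"
  assumes g: "set_integrable lborel {0..y0} g" and mass: "(LBINT y:{0..y0}. g y) = 1"
    and mean: "ystar = (LBINT y:{0..y0}. y * g y)"
    and bc: "\<And>y. y \<in> {0..y0} \<Longrightarrow> u y = e * g y / ((a1 * z0 - a2 * ystar) * \<tau>)"
    and "a1 * z0 - a2 * ystar \<noteq> 0" and "\<tau> \<noteq> 0"
  shows "(LBINT y:{0<..y0}. (a1 * z0 - a2 * y) * u y) = e / \<tau>"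
proof -
  have "(LBINT y:{0<..y0}. (a1 * z0 - a2 * y) * u y)
      = (LBINT y:{0<..y0}. e / ((a1 * z0 - a2 * ystar) * \<tau>) * ((a1 * z0 - a2 * y) * g y))"
    using bc by (intro set_lebesgue_integral_cong) auto
  also have "\<dots> = e / \<tau>"
    using set_integral_affine_mult_density[OF g mass mean, of "a1 * z0" a2] assms(5,6) by simp
  finally show ?thesis .
qed

theorem proposition2:
  fixes a1 a2 a3 a4 a5 b \<beta>vh m \<tau>h \<tau>v \<mu>v z0 y0 ystar :: real
    and g \<beta>hv :: "real \<Rightarrow> real"
    and S E Ev Iv :: "real \<Rightarrow> real"
    and I :: "real \<Rightarrow> real \<Rightarrow> real \<Rightarrow> real"
    and R :: "real \<Rightarrow> real \<Rightarrow> real"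
  assumes pos: "a1 > 0" "a2 > 0" "a3 > 0" "a4 > 0" "a5 > 0" "b > 0" "\<beta>vh > 0" "m > 0"
      "\<tau>h > 0" "\<tau>v > 0" "\<mu>v > 0" "z0 > 0"
    and y0_def: "y0 = z0 * a1 / a2"
    (* g is a probability density on [0,y0] with mean ystar in (0,y0) *)
    and g_nonneg: "\<And>y. y \<in> {0..y0} \<Longrightarrow> g y \<ge> 0"
    and g_int: "set_integrable lborel {0..y0} g"
    and g_mass: "(LBINT y:{0..y0}. g y) = 1"
    and ystar_def: "ystar = (LBINT y:{0..y0}. y * g y)"
    and ystar_range: "0 < ystar" "ystar < y0"
    (* regularity of I: continuous up to the boundary (except the corner z=z0,y=0),
       C^1 in the interior *)
    and I_cont: "continuous_on {(t, z, y). t > 0 \<and> z \<ge> z0 \<and> y \<ge> 0 \<and> (z, y) \<noteq> (z0, 0)}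
                   (\<lambda>(t, z, y). I t z y)"
    and I_diff: "\<And>t z y. t > 0 \<Longrightarrow> z > z0 \<Longrightarrow> y > 0 \<Longrightarrow>
                   (\<lambda>s. I s z y) differentiable (at t) \<and>
                   (\<lambda>w. I t w y) differentiable (at z) \<and>
                   (\<lambda>w. I t z w) differentiable (at y)"
    and I_C1: "continuous_on ({0<..} \<times> {z0<..} \<times> {0<..}) (\<lambda>(t, z, y). deriv (\<lambda>s. I s z y) t)"
              "continuous_on ({0<..} \<times> {z0<..} \<times> {0<..}) (\<lambda>(t, z, y). deriv (\<lambda>w. I t w y) z)"
              "continuous_on ({0<..} \<times> {z0<..} \<times> {0<..}) (\<lambda>(t, z, y). deriv (\<lambda>w. I t z w) y)"
    (* the transport equation for I *)
    and I_pde: "\<And>t z y. t > 0 \<Longrightarrow> z > z0 \<Longrightarrow> y > 0 \<Longrightarrow>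
                   deriv (\<lambda>s. I s z y) t
                 + deriv (\<lambda>w. (a1 * w - a2 * y) * I t w y) z
                 + deriv (\<lambda>w. (- a3 * w + a4 * z) * I t z w) y = 0"
    (* regularity of R *)
    and R_cont: "continuous_on {(t, y). t > 0 \<and> y \<ge> y0} (\<lambda>(t, y). R t y)"
    and R_diff: "\<And>t y. t > 0 \<Longrightarrow> y > y0 \<Longrightarrow>
                   (\<lambda>s. R s y) differentiable (at t) \<and> (\<lambda>w. R t w) differentiable (at y)"
    and R_C1: "continuous_on ({0<..} \<times> {y0<..}) (\<lambda>(t, y). deriv (\<lambda>s. R s y) t)"
              "continuous_on ({0<..} \<times> {y0<..}) (\<lambda>(t, y). deriv (\<lambda>w. R t w) y)"
    (* the equation for R *)
    and R_pde: "\<And>t y. t > 0 \<Longrightarrow> y > y0 \<Longrightarrow>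
                   deriv (\<lambda>s. R s y) t - deriv (\<lambda>w. a5 * w * R t w) y
                 = - I t z0 y * (a1 * z0 - a2 * y)"
    (* the ODEs *)
    and S_ode: "\<And>t. t > 0 \<Longrightarrow>
                 (S has_real_derivative (- b * \<beta>vh * m * Iv t * S t + a5 * y0 * R t y0)) (at t)"
    and E_ode: "\<And>t. t > 0 \<Longrightarrow>
                 (E has_real_derivative (b * \<beta>vh * m * Iv t * S t - E t / \<tau>h)) (at t)"
    and Ev_ode: "\<And>t. t > 0 \<Longrightarrow>
                 (Ev has_real_derivative
                    (b * (LBINT y:{0..}. LBINT z:{z0..}. I t z y * \<beta>hv z) * (1 - Ev t - Iv t)
                     - (1 / \<tau>v + \<mu>v) * Ev t)) (at t)"
    and Iv_ode: "\<And>t. t > 0 \<Longrightarrow>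
                 (Iv has_real_derivative (Ev t / \<tau>v - \<mu>v * Iv t)) (at t)"
    (* boundary conditions *)
    and I_bc_z0: "\<And>t y. t > 0 \<Longrightarrow> y \<in> {0..y0} \<Longrightarrow>
                   I t z0 y = E t * g y / ((a1 * z0 - a2 * ystar) * \<tau>h)"
    and I_bc_y0: "\<And>t z. t > 0 \<Longrightarrow> z > z0 \<Longrightarrow> I t z 0 = 0"
    (* decay at infinity, sufficiently fast (locally uniformly in t) *)
    and I_decay: "\<And>t1 t2. 0 < t1 \<Longrightarrow> t1 \<le> t2 \<Longrightarrow> \<exists>C. \<forall>t z y.
                   t \<in> {t1..t2} \<and> z > z0 \<and> y > 0 \<longrightarrow>
                     \<bar>I t z y\<bar> \<le> C / (1 + z\<^sup>2 + y\<^sup>2)\<^sup>2 \<and>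
                     \<bar>deriv (\<lambda>s. I s z y) t\<bar> \<le> C / (1 + z\<^sup>2 + y\<^sup>2)\<^sup>2 \<and>
                     \<bar>deriv (\<lambda>w. I t w y) z\<bar> \<le> C / (1 + z\<^sup>2 + y\<^sup>2)\<^sup>2 \<and>
                     \<bar>deriv (\<lambda>w. I t z w) y\<bar> \<le> C / (1 + z\<^sup>2 + y\<^sup>2)\<^sup>2"
    and R_decay: "\<And>t1 t2. 0 < t1 \<Longrightarrow> t1 \<le> t2 \<Longrightarrow> \<exists>C. \<forall>t y.
                   t \<in> {t1..t2} \<and> y > y0 \<longrightarrow>
                     \<bar>R t y\<bar> \<le> C / (1 + y\<^sup>2)\<^sup>2 \<and>
                     \<bar>deriv (\<lambda>s. R s y) t\<bar> \<le> C / (1 + y\<^sup>2)\<^sup>2 \<and>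
                     \<bar>deriv (\<lambda>w. R t w) y\<bar> \<le> C / (1 + y\<^sup>2)\<^sup>2"
  shows "\<And>t. t > 0 \<Longrightarrow>
           ((\<lambda>t. S t + E t + (LBINT y:{0..}. LBINT z:{z0..}. I t z y) + (LBINT y:{y0..}. R t y))
              has_real_derivative 0) (at t)"
proof -
  fix t :: real
  assume "t > 0"
  have "y0 > 0"
    using pos y0_def by simp
  have "a2 * ystar < a2 * y0"
    using pos ystar_range by simp
  then have "a1 * z0 - a2 * ystar > 0"
    using pos y0_def by (simp add: mult.commute)
  let ?F = "\<lambda>y. (a1 * z0 - a2 * y) * I t z0 y"
  note infected = infected_mass_balance[OF I_cont I_diff I_C1 I_pde I_bc_y0 I_decay \<open>t > 0\<close>]
  have recovered: "((\<lambda>s. LBINT y:{y0..}. R s y) has_real_derivative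
      - a5 * y0 * R t y0 - (LBINT y:{y0<..}. ?F y)) (at t)"
    by (rule recovered_mass_balance[OF R_cont R_diff R_C1 _ R_decay _ \<open>t > 0\<close>])
       (use R_pde set_integrable_subset[OF infected(1)] \<open>y0 > 0\<close> in \<open>auto simp: algebra_simps\<close>)
  have "(LBINT y:{0<..y0}. ?F y) = E t / \<tau>h"
    using boundary_influx_eq[OF g_int g_mass ystar_def I_bc_z0[OF \<open>t > 0\<close>]]
      \<open>a1 * z0 - a2 * ystar > 0\<close> pos by simp
  then have "(LBINT y:{0<..}. ?F y) = E t / \<tau>h + (LBINT y:{y0<..}. ?F y)"
    using set_integral_Ioi_split[OF infected(1), of y0] \<open>y0 > 0\<close> by simp
  moreover have "((\<lambda>t. S t + E t + (LBINT y:{0..}. LBINT z:{z0..}. I t z y) + (LBINT y:{y0..}. R t y))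
      has_real_derivative (- b * \<beta>vh * m * Iv t * S t + a5 * y0 * R t y0)
        + (b * \<beta>vh * m * Iv t * S t - E t / \<tau>h)
        + (LBINT y:{0<..}. ?F y) + (- a5 * y0 * R t y0 - (LBINT y:{y0<..}. ?F y))) (at t)"
    by (intro DERIV_add S_ode[OF \<open>t > 0\<close>] E_ode[OF \<open>t > 0\<close>] infected(2) recovered)
  ultimately show "((\<lambda>t. S t + E t + (LBINT y:{0..}. LBINT z:{z0..}. I t z y) + (LBINT y:{y0..}. R t y))
      has_real_derivative 0) (at t)"
    by simp
qed

end
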